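(* Let $u$ be a stable sorted configuration on $K_{m,n}$ with $r$-vector $(r_1,\dots,r_n)$. Let $h$ be the smallest index $1\le h\le n$ with $r_h=\max\{r_1,\dots,r_n\}$, and let $k:=u_{b_h}-r_h+2$ (so $k=1+\#\{j\le m-1: u_{a_j}+1\le h-1\}$; one has $1\le k\le m-1$ when $m\ge 2$). Define $$u':=u+(r_h-2)\Delta^{(a_m)}-\sum_{s=k}^{m-1}\Delta^{(a_s)}-\sum_{t=h}^{n}\Delta^{(b_t)}.$$ Then $u'=\mathrm{park}(u)$. Explicitly, $u'_{b_i}=u_{b_i}-u_{b_h}+m\,\chi(i\le h-1)$ for $1\le i\le n$, $u'_{a_j}=u_{a_j}-(h-1)+n\,\chi(j\le k-1)$ for $1\le j\le m-1$, and $u'_{a_m}=\mathrm{degree}(u)-\sum_i u'_{b_i}-\sum_{j\le m-1}u'_{a_j}$; moreover the sorted version of $u'$ has $a$-values $(u'_{a_k},\dots,u'_{a_{m-1}},u'_{a_1},\dots,u'_{a_{k-1}})$ and $b$-values $(u'_{b_h},\dots,u'_{b_n},u'_{b_1},\dots,u'_{b_{h-1}})$ (with the same sink value).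
   Context: Let $m,n\ge 1$. $K_{m,n}$ is the complete bipartite graph with vertex set $V=A_m\sqcup B_n$, $A_m=\{a_1,\dots,a_m\}$, $B_n=\{b_1,\dots,b_n\}$, with exactly one edge $\{a_i,b_j\}$ for every $i,j$; $a_m$ is the sink. A configuration is a function $u:V\to\mathbb Z$; $\mathrm{degree}(u)=\sum_c u_c$. For $c\in V$ with graph degree $d_c$ ($d_{a_i}=n$, $d_{b_j}=m$), $\Delta^{(c)}=d_c e_c-\sum_{c'\text{ adjacent to }c}e_{c'}$, with $e_c$ the indicator configuration of $c$; $\Delta^{(C)}=\sum_{c\in C}\Delta^{(c)}$. A configuration $u$ is parking if $u_c\ge0$ for all $c\neq a_m$ and for every non-empty $C\subseteq V\setminus\{a_m\}$, $u-\Delta^{(C)}$ has a negative value at some vertex other than $a_m$; every configuration is toppling equivalent (difference in the integer span of the $\Delta^{(c)}$) to a unique parking configuration $\mathrm{park}(u)$. $u$ is stable if $0\le u_{a_j}\le n-1$ for $1\le j\le m-1$ and $0\le u_{b_i}\le m-1$ for all $i$; sorted if $u_{a_1}\le\dots\le u_{a_{m-1}}$ and $u_{b_1}\le\dots\le u_{b_n}$ (no condition at the sink). The $r$-vector of a stable sorted $u$ is $(r_1,\dots,r_n)$ with $r_i=u_{b_i}+1-\#\{j\in\{1,\dots,m-1\}: u_{a_j}+1\le i-1\}$. $\chi(\mathcal P)$ is $1$ if $\mathcal P$ holds and $0$ otherwise. *)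

theory Defs
  imports Main
begin

text \<open>Vertices of K_{m,n}: A i (1 \<le> i \<le> m) and B j (1 \<le> j \<le> n); the sink is A m.
  Configurations are functions vert \<Rightarrow> int; only their values on verts m n matter.\<close>

datatype vert = A nat | B nat

definition verts :: "nat \<Rightarrow> nat \<Rightarrow> vert set" where
  "verts m n = A ` {1..m} \<union> B ` {1..n}"

definition adjacent :: "nat \<Rightarrow> nat \<Rightarrow> vert \<Rightarrow> vert \<Rightarrow> bool" where
  "adjacent m n c c' = (\<exists>i\<in>{1..m}. \<exists>j\<in>{1..n}. {c, c'} = {A i, B j})"

definition nbrs :: "nat \<Rightarrow> nat \<Rightarrow> vert \<Rightarrow> vert set" where
  "nbrs m n c = {c' \<in> verts m n. adjacent m n c c'}"

definition gdeg :: "nat \<Rightarrow> nat \<Rightarrow> vert \<Rightarrow> nat" where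
  "gdeg m n c = card (nbrs m n c)"

definition ind :: "vert \<Rightarrow> vert \<Rightarrow> int" where
  "ind c = (\<lambda>x. if x = c then 1 else 0)"

definition Lap :: "nat \<Rightarrow> nat \<Rightarrow> vert \<Rightarrow> vert \<Rightarrow> int" where
  "Lap m n c = (\<lambda>x. int (gdeg m n c) * ind c x - (\<Sum>c'\<in>nbrs m n c. ind c' x))"

definition LapSet :: "nat \<Rightarrow> nat \<Rightarrow> vert set \<Rightarrow> vert \<Rightarrow> int" where
  "LapSet m n C = (\<lambda>x. \<Sum>c\<in>C. Lap m n c x)"

definition topp_equiv :: "nat \<Rightarrow> nat \<Rightarrow> (vert \<Rightarrow> int) \<Rightarrow> (vert \<Rightarrow> int) \<Rightarrow> bool" where
  "topp_equiv m n u v =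
     (\<exists>z :: vert \<Rightarrow> int. \<forall>x\<in>verts m n. u x - v x = (\<Sum>c\<in>verts m n. z c * Lap m n c x))"

definition parking :: "nat \<Rightarrow> nat \<Rightarrow> (vert \<Rightarrow> int) \<Rightarrow> bool" where
  "parking m n u =
     ((\<forall>c\<in>verts m n - {A m}. 0 \<le> u c) \<and>
      (\<forall>C. C \<subseteq> verts m n - {A m} \<and> C \<noteq> {} \<longrightarrow>
           (\<exists>c\<in>verts m n - {A m}. u c - LapSet m n C c < 0)))"

definition park :: "nat \<Rightarrow> nat \<Rightarrow> (vert \<Rightarrow> int) \<Rightarrow> vert \<Rightarrow> int" where
  "park m n u = (THE v. parking m n v \<and> topp_equiv m n u v \<and> (\<forall>x. x \<notin> verts m n \<longrightarrow> v x = 0))"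

definition degree :: "nat \<Rightarrow> nat \<Rightarrow> (vert \<Rightarrow> int) \<Rightarrow> int" where
  "degree m n u = (\<Sum>c\<in>verts m n. u c)"

definition stable :: "nat \<Rightarrow> nat \<Rightarrow> (vert \<Rightarrow> int) \<Rightarrow> bool" where
  "stable m n u = ((\<forall>j\<in>{1..m-1}. 0 \<le> u (A j) \<and> u (A j) \<le> int n - 1) \<and>
                   (\<forall>i\<in>{1..n}. 0 \<le> u (B i) \<and> u (B i) \<le> int m - 1))"

definition sorted_config :: "nat \<Rightarrow> nat \<Rightarrow> (vert \<Rightarrow> int) \<Rightarrow> bool" where
  "sorted_config m n u = ((\<forall>j1\<in>{1..m-1}. \<forall>j2\<in>{1..m-1}. j1 \<le> j2 \<longrightarrow> u (A j1) \<le> u (A j2)) \<and>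
                         (\<forall>i1\<in>{1..n}. \<forall>i2\<in>{1..n}. i1 \<le> i2 \<longrightarrow> u (B i1) \<le> u (B i2)))"

definition rvec :: "nat \<Rightarrow> nat \<Rightarrow> (vert \<Rightarrow> int) \<Rightarrow> nat \<Rightarrow> int" where
  "rvec m n u i = u (B i) + 1 - int (card {j\<in>{1..m-1}. u (A j) + 1 \<le> int i - 1})"

definition chi :: "bool \<Rightarrow> int" where
  "chi P = (if P then 1 else 0)"

end

theory Submission
  imports Defs
begin

text \<open>The configuration $u'$ differs from $u$ by an integer combination of toppling vectors,
  so it is toppling equivalent to $u$; the explicit formulas for its values show that it is
  nonnegative off the sink, and it remains to see that no nonempty set
  $C = \{a_j : j \in S\} \cup \{b_i : i \in T\}$ of non-sink vertices can be toppled, i.e.\ that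
  not all $a_j$, $j \in S$, carry at least $n - |T|$ chips while all $b_i$, $i \in T$, carry at
  least $m - |S|$. Take the first $b$-vertex $b_{i_0}$ of $T$ in the cyclic order
  $h, \dots, n, 1, \dots, h-1$. The chip count on the $a_j$ confines $S$ to the $a$-vertices
  whose $u$-value lies outside (if $i_0 \ge h$) resp.\ inside (if $i_0 < h$) the window between
  $i_0$ and $h$, and the chip count on $b_{i_0}$ then forces $r_{i_0} > r_h$ resp.\
  $r_{i_0} \ge r_h$, against the choice of $h$ as the first maximum of the $r$-vector.

  Uniqueness of the parking representative is the usual maximum principle: if two parking
  configurations differ by $\sum_c z_c \Delta^{(c)}$, the set where $z$ is maximal must contain
  the sink, so $z$ is constant.\<close>

lemma card_le_sum_gap:
  fixes f :: "'a \<Rightarrow> int"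
  assumes "finite I" "\<forall>i\<in>I. f i \<le> M"
  shows "int (card I) - int (card {i\<in>I. f i = M}) \<le> (\<Sum>i\<in>I. M - f i)"
proof -
  have "int (card I) - int (card {i\<in>I. f i = M}) = int (card {i\<in>I. f i \<noteq> M})"
  proof -
    have "{i\<in>I. f i \<noteq> M} = I - {i\<in>I. f i = M}" by blast
    then show ?thesis
      using assms(1) by (simp add: card_Diff_subset card_mono)
  qed
  also have "\<dots> = (\<Sum>i\<in>{i\<in>I. f i \<noteq> M}. 1)" by simp
  also have "\<dots> \<le> (\<Sum>i\<in>{i\<in>I. f i \<noteq> M}. M - f i)"
    using assms(2) by (intro sum_mono) force
  also have "\<dots> \<le> (\<Sum>i\<in>I. M - f i)"
    using assms by (intro sum_mono2) auto
  finally show ?thesis .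
qed

lemma downclosed_eq_atLeastAtMost_card:
  assumes "D \<subseteq> {1..N}" and "\<And>j j'. j \<in> D \<Longrightarrow> 1 \<le> j' \<Longrightarrow> j' \<le> j \<Longrightarrow> j' \<in> D"
  shows "D = {1..card D}"
proof (cases "D = {}")
  case False
  have fin: "finite D" using assms(1) finite_subset by blast
  have "D = {1..Max D}"
  proof
    show "D \<subseteq> {1..Max D}" using assms(1) fin by auto
    show "{1..Max D} \<subseteq> D" using assms(2) Max_in[OF fin False] by auto
  qed
  moreover from this have "card D = Max D" by (metis card_atLeastAtMost diff_Suc_1)
  ultimately show ?thesis by simp
qed simp

lemma sorted_map_upt_append:
  assumes "\<And>i j. a \<le> i \<Longrightarrow> i \<le> j \<Longrightarrow> j < b \<Longrightarrow> f i \<le> f j"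
    and "\<And>i j. c \<le> i \<Longrightarrow> i \<le> j \<Longrightarrow> j < a \<Longrightarrow> f i \<le> f j"
    and "\<And>i j. a \<le> i \<Longrightarrow> i < b \<Longrightarrow> c \<le> j \<Longrightarrow> j < a \<Longrightarrow> f i \<le> f j"
  shows "sorted (map f ([a..<b] @ [c..<a]))"
  unfolding map_append sorted_append
proof (intro conjI ballI)
  show "sorted (map f [a..<b])" "sorted (map f [c..<a])"
    using assms(1,2) by (auto simp: sorted_map sorted_wrt_iff_nth_less)
next
  fix x y assume "x \<in> set (map f [a..<b])" "y \<in> set (map f [c..<a])"
  then show "x \<le> y" using assms(3) by auto
qed

section \<open>The Laplacian of the complete bipartite graph\<close>

lemma finite_verts: "finite (verts m n)"
  unfolding verts_def by auto

lemma A_in_verts: "A i \<in> verts m n \<longleftrightarrow> i \<in> {1..m}"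
  unfolding verts_def by auto

lemma B_in_verts: "B j \<in> verts m n \<longleftrightarrow> j \<in> {1..n}"
  unfolding verts_def by auto

lemma sum_verts: "(\<Sum>c\<in>verts m n. f c) = (\<Sum>i=1..m. f (A i)) + (\<Sum>j=1..n. f (B j))"
proof -
  have "(\<Sum>c\<in>verts m n. f c) = (\<Sum>c\<in>A`{1..m}. f c) + (\<Sum>c\<in>B`{1..n}. f c)"
    unfolding verts_def by (rule sum.union_disjoint) auto
  also have "\<dots> = (\<Sum>i=1..m. f (A i)) + (\<Sum>j=1..n. f (B j))"
    by (simp add: sum.reindex inj_on_def)
  finally show ?thesis .
qed

lemma nbrs_A: "i \<in> {1..m} \<Longrightarrow> nbrs m n (A i) = B ` {1..n}"
  unfolding nbrs_def adjacent_def verts_def by (auto simp: doubleton_eq_iff)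

lemma nbrs_B: "j \<in> {1..n} \<Longrightarrow> nbrs m n (B j) = A ` {1..m}"
  unfolding nbrs_def adjacent_def verts_def by (auto simp: doubleton_eq_iff)

lemma sum_ind: "finite S \<Longrightarrow> (\<Sum>c\<in>S. ind c x) = (if x \<in> S then 1 else 0)"
  unfolding ind_def by simp

lemma Lap_A:
  "i \<in> {1..m} \<Longrightarrow> Lap m n (A i) x = int n * ind (A i) x - (if x \<in> B ` {1..n} then 1 else 0)"
  unfolding Lap_def gdeg_def using nbrs_A[of i m n] by (simp add: sum_ind card_image inj_on_def)

lemma Lap_B:
  "j \<in> {1..n} \<Longrightarrow> Lap m n (B j) x = int m * ind (B j) x - (if x \<in> A ` {1..m} then 1 else 0)"
  unfolding Lap_def gdeg_def using nbrs_B[of j n m] by (simp add: sum_ind card_image inj_on_def)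

lemma Lap_A_A: "i \<in> {1..m} \<Longrightarrow> Lap m n (A i) (A j) = (if j = i then int n else 0)"
  by (simp add: Lap_A ind_def image_iff)

lemma Lap_A_B: "i \<in> {1..m} \<Longrightarrow> Lap m n (A i) (B j) = (if j \<in> {1..n} then -1 else 0)"
  by (auto simp add: Lap_A ind_def image_iff)

lemma Lap_B_B: "j \<in> {1..n} \<Longrightarrow> Lap m n (B j) (B i) = (if i = j then int m else 0)"
  by (simp add: Lap_B ind_def image_iff)

lemma Lap_B_A: "j \<in> {1..n} \<Longrightarrow> Lap m n (B j) (A i) = (if i \<in> {1..m} then -1 else 0)"
  by (auto simp add: Lap_B ind_def image_iff)

lemma sum_Lap_at_A:
  assumes "i \<in> {1..m}"
  shows "(\<Sum>c\<in>verts m n. z c * Lap m n c (A i)) = int n * z (A i) - (\<Sum>j=1..n. z (B j))"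
proof -
  have "(\<Sum>x=1..m. z (A x) * Lap m n (A x) (A i)) = (\<Sum>x=1..m. if x = i then int n * z (A i) else 0)"
    by (rule sum.cong) (auto simp: Lap_A_A)
  moreover have "(\<Sum>x=1..n. z (B x) * Lap m n (B x) (A i)) = (\<Sum>x=1..n. - z (B x))"
    by (rule sum.cong) (use assms in \<open>auto simp: Lap_B_A\<close>)
  ultimately show ?thesis
    unfolding sum_verts using assms by (simp add: sum_negf)
qed

lemma sum_Lap_at_B:
  assumes "j \<in> {1..n}"
  shows "(\<Sum>c\<in>verts m n. z c * Lap m n c (B j)) = int m * z (B j) - (\<Sum>i=1..m. z (A i))"
proof -
  have "(\<Sum>x=1..n. z (B x) * Lap m n (B x) (B j)) = (\<Sum>x=1..n. if x = j then int m * z (B j) else 0)"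
    by (rule sum.cong) (auto simp: Lap_B_B)
  moreover have "(\<Sum>x=1..m. z (A x) * Lap m n (A x) (B j)) = (\<Sum>x=1..m. - z (A x))"
    by (rule sum.cong) (use assms in \<open>auto simp: Lap_A_B\<close>)
  ultimately show ?thesis
    unfolding sum_verts using assms by (simp add: sum_negf)
qed

lemma sum_Lap_at_eq_0:
  assumes "x \<in> verts m n"
  shows "(\<Sum>c\<in>verts m n. Lap m n c x) = 0"
proof (cases x)
  case (A i)
  then show ?thesis
    using sum_Lap_at_A[where z="\<lambda>_. 1"] assms by (simp add: A_in_verts)
next
  case (B j)
  then show ?thesis
    using sum_Lap_at_B[where z="\<lambda>_. 1"] assms by (simp add: B_in_verts)
qed

lemma sum_Lap_eq_0:
  assumes "c \<in> verts m n"
  shows "(\<Sum>x\<in>verts m n. Lap m n c x) = 0"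
proof (cases c)
  case (A i)
  have i: "i \<in> {1..m}" using assms A by (simp add: A_in_verts)
  have "(\<Sum>x=1..m. Lap m n (A i) (A x)) = (\<Sum>x=1..m. if i = x then int n else 0)"
    by (rule sum.cong) (auto simp: Lap_A_A[OF i])
  moreover have "(\<Sum>x=1..n. Lap m n (A i) (B x)) = (\<Sum>x=1..n. -1)"
    by (rule sum.cong) (auto simp: Lap_A_B[OF i])
  ultimately show ?thesis
    unfolding A sum_verts using i by simp
next
  case (B j)
  have j: "j \<in> {1..n}" using assms B by (simp add: B_in_verts)
  have "(\<Sum>x=1..n. Lap m n (B j) (B x)) = (\<Sum>x=1..n. if j = x then int m else 0)"
    by (rule sum.cong) (auto simp: Lap_B_B[OF j])
  moreover have "(\<Sum>x=1..m. Lap m n (B j) (A x)) = (\<Sum>x=1..m. -1)"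
    by (rule sum.cong) (auto simp: Lap_B_A[OF j])
  ultimately show ?thesis
    unfolding B sum_verts using j by simp
qed

lemma vert_set_decomp: "C = A ` {i. A i \<in> C} \<union> B ` {j. B j \<in> C}"
proof (rule set_eqI)
  fix x
  show "x \<in> C \<longleftrightarrow> x \<in> A ` {i. A i \<in> C} \<union> B ` {j. B j \<in> C}"
    by (cases x) auto
qed

lemma LapSet_image:
  assumes "finite S" "finite T"
  shows "LapSet m n (A`S \<union> B`T) x = (\<Sum>i\<in>S. Lap m n (A i) x) + (\<Sum>j\<in>T. Lap m n (B j) x)"
proof -
  have "LapSet m n (A`S \<union> B`T) x = (\<Sum>c\<in>A`S. Lap m n c x) + (\<Sum>c\<in>B`T. Lap m n c x)"
    unfolding LapSet_def by (rule sum.union_disjoint) (use assms in auto)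
  also have "\<dots> = (\<Sum>i\<in>S. Lap m n (A i) x) + (\<Sum>j\<in>T. Lap m n (B j) x)"
    by (simp add: sum.reindex inj_on_def)
  finally show ?thesis .
qed

lemma LapSet_at_A:
  assumes "S \<subseteq> {1..m}" "T \<subseteq> {1..n}" "j \<in> {1..m}"
  shows "LapSet m n (A`S \<union> B`T) (A j) = (if j \<in> S then int n else 0) - int (card T)"
proof -
  have fin: "finite S" "finite T" using assms finite_subset by blast+
  have "(\<Sum>i\<in>S. Lap m n (A i) (A j)) = (\<Sum>i\<in>S. if j = i then int n else 0)"
    by (rule sum.cong) (use assms in \<open>auto simp: Lap_A_A\<close>)
  moreover have "(\<Sum>i\<in>T. Lap m n (B i) (A j)) = (\<Sum>i\<in>T. -1)"
    by (rule sum.cong) (use assms in \<open>auto simp: Lap_B_A\<close>)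
  ultimately show ?thesis
    unfolding LapSet_image[OF fin] using fin by simp
qed

lemma LapSet_at_B:
  assumes "S \<subseteq> {1..m}" "T \<subseteq> {1..n}" "j \<in> {1..n}"
  shows "LapSet m n (A`S \<union> B`T) (B j) = (if j \<in> T then int m else 0) - int (card S)"
proof -
  have fin: "finite S" "finite T" using assms finite_subset by blast+
  have "(\<Sum>i\<in>T. Lap m n (B i) (B j)) = (\<Sum>i\<in>T. if j = i then int m else 0)"
    by (rule sum.cong) (use assms in \<open>auto simp: Lap_B_B\<close>)
  moreover have "(\<Sum>i\<in>S. Lap m n (A i) (B j)) = (\<Sum>i\<in>S. -1)"
    by (rule sum.cong) (use assms in \<open>auto simp: Lap_A_B\<close>)
  ultimately show ?thesis
    unfolding LapSet_image[OF fin] using fin by simp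
qed

lemma topp_equiv_topple:
  assumes "c0 \<in> verts m n" "C \<subseteq> verts m n"
  shows "topp_equiv m n u (\<lambda>x. u x + a * Lap m n c0 x - LapSet m n C x)"
  unfolding topp_equiv_def
proof (intro exI ballI)
  fix x
  let ?z = "\<lambda>c. (if c = c0 then - a else 0) + (if c \<in> C then 1 else 0)"
  have "(\<Sum>c\<in>verts m n. ?z c * Lap m n c x)
      = (\<Sum>c\<in>verts m n. (if c = c0 then - a * Lap m n c x else 0)
                               + (if c \<in> C then Lap m n c x else 0))"
    by (rule sum.cong) (auto simp: distrib_right)
  also have "\<dots> = (\<Sum>c\<in>verts m n. if c = c0 then - a * Lap m n c x else 0)
                 + (\<Sum>c\<in>verts m n. if c \<in> C then Lap m n c x else 0)"
    by (rule sum.distrib)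
  also have "\<dots> = - a * Lap m n c0 x + LapSet m n C x"
    using assms finite_verts[of m n]
    by (simp add: LapSet_def sum.If_cases Int_absorb1)
  finally show "u x - (u x + a * Lap m n c0 x - LapSet m n C x) = (\<Sum>c\<in>verts m n. ?z c * Lap m n c x)"
    by simp
qed

lemma topp_equiv_degree:
  assumes "topp_equiv m n u v"
  shows "degree m n u = degree m n v"
proof -
  obtain z where z: "\<forall>x\<in>verts m n. u x - v x = (\<Sum>c\<in>verts m n. z c * Lap m n c x)"
    using assms unfolding topp_equiv_def by blast
  have "degree m n u - degree m n v = (\<Sum>x\<in>verts m n. \<Sum>c\<in>verts m n. z c * Lap m n c x)"
    unfolding degree_def sum_subtractf[symmetric] using z by simp
  also have "\<dots> = (\<Sum>c\<in>verts m n. z c * (\<Sum>x\<in>verts m n. Lap m n c x))"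
    by (subst sum.swap) (simp add: sum_distrib_left)
  also have "\<dots> = 0"
    by (simp add: sum_Lap_eq_0)
  finally show ?thesis by simp
qed

section \<open>Uniqueness of parking configurations\<close>

text \<open>Vertices outside a fired set only gain chips, so only the fired vertices can go negative.\<close>

lemma firing_negative_iff:
  assumes nonneg: "\<forall>c\<in>verts m n - {A m}. 0 \<le> v c" and S: "S \<subseteq> {1..m-1}" and T: "T \<subseteq> {1..n}"
  shows "(\<exists>c\<in>verts m n - {A m}. v c - LapSet m n (A`S \<union> B`T) c < 0) \<longleftrightarrow>
         (\<exists>j\<in>S. v (A j) < int n - int (card T)) \<or> (\<exists>i\<in>T. v (B i) < int m - int (card S))"
proof
  have S': "S \<subseteq> {1..m}" using S by (rule order.trans) auto
  assume "\<exists>c\<in>verts m n - {A m}. v c - LapSet m n (A`S \<union> B`T) c < 0"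
  then obtain c where c: "c \<in> verts m n - {A m}" "v c - LapSet m n (A`S \<union> B`T) c < 0"
    by blast
  show "(\<exists>j\<in>S. v (A j) < int n - int (card T)) \<or> (\<exists>i\<in>T. v (B i) < int m - int (card S))"
  proof (cases c)
    case (A j)
    then show ?thesis
      using c nonneg LapSet_at_A[OF S' T, of j] by (force simp: A_in_verts split: if_splits)
  next
    case (B i)
    then show ?thesis
      using c nonneg LapSet_at_B[OF S' T, of i] by (force simp: B_in_verts split: if_splits)
  qed
next
  have S': "S \<subseteq> {1..m}" using S by (rule order.trans) auto
  assume "(\<exists>j\<in>S. v (A j) < int n - int (card T)) \<or> (\<exists>i\<in>T. v (B i) < int m - int (card S))"
  then show "\<exists>c\<in>verts m n - {A m}. v c - LapSet m n (A`S \<union> B`T) c < 0"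
  proof
    assume "\<exists>j\<in>S. v (A j) < int n - int (card T)"
    then obtain j where j: "j \<in> S" "v (A j) < int n - int (card T)" by blast
    have "j \<in> {1..m-1}" using S j(1) by blast
    then show ?thesis
      using j LapSet_at_A[OF S' T, of j] by (intro bexI[of _ "A j"]) (auto simp: A_in_verts)
  next
    assume "\<exists>i\<in>T. v (B i) < int m - int (card S)"
    then obtain i where i: "i \<in> T" "v (B i) < int m - int (card S)" by blast
    have "i \<in> {1..n}" using T i(1) by blast
    then show ?thesis
      using i LapSet_at_B[OF S' T, of i] by (intro bexI[of _ "B i"]) (auto simp: B_in_verts)
  qed
qed

lemma parking_iff:
  "parking m n v \<longleftrightarrow> (\<forall>c\<in>verts m n - {A m}. 0 \<le> v c) \<and>
     (\<forall>S T. S \<subseteq> {1..m-1} \<longrightarrow> T \<subseteq> {1..n} \<longrightarrow> S \<noteq> {} \<or> T \<noteq> {} \<longrightarrow>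
        (\<exists>j\<in>S. v (A j) < int n - int (card T)) \<or> (\<exists>i\<in>T. v (B i) < int m - int (card S)))"
  (is "_ \<longleftrightarrow> ?nonneg \<and> ?unstuck")
proof
  assume park: "parking m n v"
  then have nonneg: ?nonneg unfolding parking_def by blast
  have "(\<exists>j\<in>S. v (A j) < int n - int (card T)) \<or> (\<exists>i\<in>T. v (B i) < int m - int (card S))"
    if ST: "S \<subseteq> {1..m-1}" "T \<subseteq> {1..n}" "S \<noteq> {} \<or> T \<noteq> {}" for S T
  proof -
    have "A`S \<union> B`T \<subseteq> verts m n - {A m}" "A`S \<union> B`T \<noteq> {}"
      using ST by (auto simp: verts_def subset_iff)
    then have "\<exists>c\<in>verts m n - {A m}. v c - LapSet m n (A`S \<union> B`T) c < 0"
      using park unfolding parking_def by blast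
    then show ?thesis
      using firing_negative_iff[OF nonneg ST(1,2)] by blast
  qed
  with nonneg show "?nonneg \<and> ?unstuck"
    by blast
next
  assume "?nonneg \<and> ?unstuck"
  then have nonneg: ?nonneg and unstuck: ?unstuck
    by blast+
  have "\<exists>c\<in>verts m n - {A m}. v c - LapSet m n C c < 0"
    if C: "C \<subseteq> verts m n - {A m}" "C \<noteq> {}" for C
  proof -
    define S where "S = {i. A i \<in> C}"
    define T where "T = {j. B j \<in> C}"
    have CST: "C = A`S \<union> B`T" unfolding S_def T_def by (rule vert_set_decomp)
    have ST: "S \<subseteq> {1..m-1}" "T \<subseteq> {1..n}" "S \<noteq> {} \<or> T \<noteq> {}"
      using C unfolding CST by (auto simp: verts_def)
    show ?thesis
      unfolding CST using firing_negative_iff[OF nonneg ST(1,2)] unstuck ST by simp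
  qed
  then show "parking m n v" using nonneg unfolding parking_def by blast
qed

lemma sum_Lap_at_A_max:
  assumes "j \<in> {1..m}" "z (A j) = M" "\<forall>c\<in>verts m n. z c \<le> M"
  shows "int n - int (card {i\<in>{1..n}. z (B i) = M}) \<le> (\<Sum>c\<in>verts m n. z c * Lap m n c (A j))"
proof -
  have "int n - int (card {i\<in>{1..n}. z (B i) = M}) \<le> (\<Sum>i=1..n. M - z (B i))"
    using card_le_sum_gap[of "{1..n}" "\<lambda>i. z (B i)" M] assms(3) by (simp add: B_in_verts)
  then show ?thesis
    using sum_Lap_at_A[OF assms(1), of z n] assms(2) by (simp add: sum_subtractf)
qed

lemma sum_Lap_at_B_max:
  assumes "i \<in> {1..n}" "z (B i) = M" "\<forall>c\<in>verts m n. z c \<le> M"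
  shows "int m - int (card {j\<in>{1..m}. z (A j) = M}) \<le> (\<Sum>c\<in>verts m n. z c * Lap m n c (B i))"
proof -
  have "int m - int (card {j\<in>{1..m}. z (A j) = M}) \<le> (\<Sum>j=1..m. M - z (A j))"
    using card_le_sum_gap[of "{1..m}" "\<lambda>j. z (A j)" M] assms(3) by (simp add: A_in_verts)
  then show ?thesis
    using sum_Lap_at_B[OF assms(1), of z m] assms(2) by (simp add: sum_subtractf)
qed

lemma potential_le_sink:
  assumes park: "parking m n v" and w_nonneg: "\<forall>c\<in>verts m n - {A m}. 0 \<le> w c"
    and diff: "\<forall>x\<in>verts m n. v x - w x = (\<Sum>c\<in>verts m n. z c * Lap m n c x)"
    and c: "c \<in> verts m n"
  shows "z c \<le> z (A m)"
proof (rule ccontr)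
  assume "\<not> z c \<le> z (A m)"
  define M where "M = Max (z ` verts m n)"
  have le_M: "\<forall>c'\<in>verts m n. z c' \<le> M"
    unfolding M_def using finite_verts by auto
  have "M \<in> z ` verts m n"
    unfolding M_def using finite_verts c by (intro Max_in) auto
  then obtain c1 where c1: "c1 \<in> verts m n" "z c1 = M" by auto
  have sink_below: "z (A m) < M"
    using le_M c \<open>\<not> z c \<le> z (A m)\<close> by force
  define S where "S = {i\<in>{1..m}. z (A i) = M}"
  define T where "T = {j\<in>{1..n}. z (B j) = M}"
  have S_proper: "S \<subseteq> {1..m-1}"
  proof
    fix j assume "j \<in> S"
    then have "j \<in> {1..m}" "j \<noteq> m" using sink_below unfolding S_def by auto
    then show "j \<in> {1..m-1}" by auto
  qed
  moreover have "T \<subseteq> {1..n}" "S \<noteq> {} \<or> T \<noteq> {}"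
    using c1 unfolding S_def T_def by (auto simp: verts_def)
  ultimately consider (A) j where "j \<in> S" "v (A j) < int n - int (card T)"
    | (B) i where "i \<in> T" "v (B i) < int m - int (card S)"
    using park unfolding parking_iff by blast
  then show False
  proof cases
    case (A j)
    then have j: "j \<in> {1..m-1}" "j \<in> {1..m}" "z (A j) = M" using S_proper unfolding S_def by auto
    have "int n - int (card T) \<le> v (A j) - w (A j)"
      using sum_Lap_at_A_max[OF j(2,3) le_M] diff j(2) unfolding T_def by (simp add: A_in_verts)
    also have "\<dots> \<le> v (A j)"
      using w_nonneg j(1) by (force simp: A_in_verts)
    finally show False using A by simp
  next
    case (B i)
    then have i: "i \<in> {1..n}" "z (B i) = M" unfolding T_def by auto
    have "int m - int (card S) \<le> v (B i) - w (B i)"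
      using sum_Lap_at_B_max[OF i le_M] diff i(1) unfolding S_def by (simp add: B_in_verts)
    also have "\<dots> \<le> v (B i)"
      using w_nonneg i by (simp add: B_in_verts)
    finally show False using B by simp
  qed
qed

lemma parking_topp_equiv_eq:
  assumes "parking m n v" "parking m n w" "topp_equiv m n v w" "x \<in> verts m n"
  shows "v x = w x"
proof -
  obtain z where z: "\<forall>x\<in>verts m n. v x - w x = (\<Sum>c\<in>verts m n. z c * Lap m n c x)"
    using assms(3) unfolding topp_equiv_def by blast
  have z': "\<forall>x\<in>verts m n. w x - v x = (\<Sum>c\<in>verts m n. - z c * Lap m n c x)"
  proof
    fix x assume "x \<in> verts m n"
    then have "w x - v x = - (\<Sum>c\<in>verts m n. z c * Lap m n c x)"
      using z by (metis minus_diff_eq)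
    then show "w x - v x = (\<Sum>c\<in>verts m n. - z c * Lap m n c x)"
      by (simp add: sum_negf)
  qed
  have const: "z c = z (A m)" if "c \<in> verts m n" for c
    using potential_le_sink[OF assms(1) _ z that] potential_le_sink[OF assms(2) _ z' that]
      assms(1,2) unfolding parking_def by force
  have "v x - w x = (\<Sum>c\<in>verts m n. z (A m) * Lap m n c x)"
    using z assms(4) const by simp
  also have "\<dots> = 0"
    using assms(4) by (simp add: sum_distrib_left[symmetric] sum_Lap_at_eq_0)
  finally show ?thesis by simp
qed

lemma topp_equiv_euclidean:
  assumes "topp_equiv m n u v" "topp_equiv m n u w"
  shows "topp_equiv m n v w"
proof -
  obtain z1 where z1: "\<forall>x\<in>verts m n. u x - v x = (\<Sum>c\<in>verts m n. z1 c * Lap m n c x)"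
    using assms(1) unfolding topp_equiv_def by blast
  obtain z2 where z2: "\<forall>x\<in>verts m n. u x - w x = (\<Sum>c\<in>verts m n. z2 c * Lap m n c x)"
    using assms(2) unfolding topp_equiv_def by blast
  have "\<forall>x\<in>verts m n. v x - w x = (\<Sum>c\<in>verts m n. (z2 c - z1 c) * Lap m n c x)"
  proof
    fix x assume "x \<in> verts m n"
    then have "v x - w x = (\<Sum>c\<in>verts m n. z2 c * Lap m n c x) - (\<Sum>c\<in>verts m n. z1 c * Lap m n c x)"
      using z1 z2 by force
    then show "v x - w x = (\<Sum>c\<in>verts m n. (z2 c - z1 c) * Lap m n c x)"
      by (simp add: sum_subtractf left_diff_distrib)
  qed
  then show ?thesis
    unfolding topp_equiv_def by (rule exI[where x="\<lambda>c. z2 c - z1 c"])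
qed

lemma park_eq_on_verts:
  assumes "parking m n v" "topp_equiv m n u v" "x \<in> verts m n"
  shows "park m n u x = v x"
proof -
  define v0 where "v0 = (\<lambda>x. if x \<in> verts m n then v x else 0)"
  have v0: "parking m n v0" "topp_equiv m n u v0"
    using assms(1,2) unfolding parking_def topp_equiv_def v0_def by auto
  have "park m n u = v0"
    unfolding park_def
  proof (rule the_equality)
    show "parking m n v0 \<and> topp_equiv m n u v0 \<and> (\<forall>x. x \<notin> verts m n \<longrightarrow> v0 x = 0)"
      using v0 unfolding v0_def by simp
  next
    fix v' assume v': "parking m n v' \<and> topp_equiv m n u v' \<and> (\<forall>x. x \<notin> verts m n \<longrightarrow> v' x = 0)"
    then have "v0 x = v' x" if "x \<in> verts m n" for x
      using parking_topp_equiv_eq[OF v0(1) _ topp_equiv_euclidean[OF v0(2)] that] by blast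
    then show "v' = v0"
      using v' unfolding v0_def by auto
  qed
  then show ?thesis
    using assms(3) unfolding v0_def by simp
qed

section \<open>Rotating a sorted stable configuration to its parking representative\<close>

locale parking_rotation =
  fixes m n h :: nat and k :: int and u u' :: "vert \<Rightarrow> int"
  assumes m_ge_1: "1 \<le> m" and n_ge_1: "1 \<le> n"
    and stable: "stable m n u" and sorted: "sorted_config m n u"
    and h_def: "h = (LEAST i. 1 \<le> i \<and> i \<le> n \<and> rvec m n u i = Max (rvec m n u ` {1..n}))"
    and k_def: "k = u (B h) - rvec m n u h + 2"
    and u'_def: "u' = (\<lambda>x. u x + (rvec m n u h - 2) * Lap m n (A m) x
                         - (\<Sum>s\<in>{nat k..m-1}. Lap m n (A s) x)
                         - (\<Sum>t\<in>{h..n}. Lap m n (B t) x))"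
begin

definition A_below :: "nat \<Rightarrow> nat set" where
  "A_below i = {j\<in>{1..m-1}. u (A j) + 1 \<le> int i - 1}"

lemma rvec_eq: "rvec m n u i = u (B i) + 1 - int (card (A_below i))"
  unfolding rvec_def A_below_def ..

lemma stable_A: "j \<in> {1..m-1} \<Longrightarrow> 0 \<le> u (A j) \<and> u (A j) \<le> int n - 1"
  using stable unfolding stable_def by blast

lemma stable_B: "i \<in> {1..n} \<Longrightarrow> 0 \<le> u (B i) \<and> u (B i) \<le> int m - 1"
  using stable unfolding stable_def by blast

lemma sorted_A: "j \<in> {1..m-1} \<Longrightarrow> j' \<in> {1..m-1} \<Longrightarrow> j \<le> j' \<Longrightarrow> u (A j) \<le> u (A j')"
  using sorted unfolding sorted_config_def by blast

lemma sorted_B: "i \<in> {1..n} \<Longrightarrow> i' \<in> {1..n} \<Longrightarrow> i \<le> i' \<Longrightarrow> u (B i) \<le> u (B i')"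
  using sorted unfolding sorted_config_def by blast

lemma A_below_subset: "A_below i \<subseteq> {1..m-1}"
  unfolding A_below_def by auto

lemma finite_A_below [simp]: "finite (A_below i)"
  using A_below_subset finite_subset by blast

lemma A_below_mono: "i \<le> i' \<Longrightarrow> A_below i \<subseteq> A_below i'"
  unfolding A_below_def by auto

lemma card_A_below_diff:
  "i \<le> i' \<Longrightarrow> int (card (A_below i' - A_below i)) = int (card (A_below i')) - int (card (A_below i))"
  using A_below_mono by (simp add: card_Diff_subset card_mono)

lemma A_below_initial: "A_below i = {1..card (A_below i)}"
proof (rule downclosed_eq_atLeastAtMost_card[OF A_below_subset])
  fix j j' assume "j \<in> A_below i" "1 \<le> j'" "j' \<le> j"
  then show "j' \<in> A_below i"
    using sorted_A[of j' j] unfolding A_below_def by auto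
qed

lemma h_is_first_max: "1 \<le> h \<and> h \<le> n \<and> rvec m n u h = Max (rvec m n u ` {1..n})"
proof -
  have "Max (rvec m n u ` {1..n}) \<in> rvec m n u ` {1..n}"
    using n_ge_1 by (intro Max_in) auto
  then have "\<exists>i. 1 \<le> i \<and> i \<le> n \<and> rvec m n u i = Max (rvec m n u ` {1..n})"
    by force
  then show ?thesis
    unfolding h_def by (rule LeastI_ex)
qed

lemma h_range: "1 \<le> h" "h \<le> n"
  using h_is_first_max by auto

lemma rvec_le_h: "i \<in> {1..n} \<Longrightarrow> rvec m n u i \<le> rvec m n u h"
  using h_is_first_max by simp

lemma rvec_less_h:
  assumes "1 \<le> i" "i < h"
  shows "rvec m n u i < rvec m n u h"
proof -
  have "\<not> (1 \<le> i \<and> i \<le> n \<and> rvec m n u i = Max (rvec m n u ` {1..n}))"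
    using not_less_Least[of i] assms unfolding h_def by blast
  moreover have i: "i \<in> {1..n}"
    using assms h_range by auto
  ultimately have "rvec m n u i \<noteq> rvec m n u h"
    using h_is_first_max by auto
  then show ?thesis
    using rvec_le_h[OF i] by simp
qed

lemma k_eq: "k = 1 + int (card (A_below h))"
  using k_def rvec_eq by simp

lemma k_ge_1: "1 \<le> k"
  using k_eq by simp

lemma k_le_m: "k \<le> int m"
  using k_eq card_mono[OF _ A_below_subset, of h] m_ge_1 by simp

lemma less_k_iff:
  assumes "j \<in> {1..m-1}"
  shows "int j < k \<longleftrightarrow> u (A j) \<le> int h - 2"
proof -
  have "int j < k \<longleftrightarrow> j \<in> {1..card (A_below h)}"
    using assms k_eq by auto
  also have "\<dots> \<longleftrightarrow> j \<in> A_below h"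
    using A_below_initial by blast
  finally show ?thesis
    using assms unfolding A_below_def by auto
qed

text \<open>If every non-sink $a$-vertex lay below $h$, then $r_1 > r_h$ unless $h = 1$.\<close>

lemma k_le_m_minus_1:
  assumes "2 \<le> m"
  shows "k \<le> int m - 1"
proof (rule ccontr)
  assume "\<not> k \<le> int m - 1"
  then have full: "int (card (A_below h)) = int m - 1"
    using k_eq k_le_m by simp
  have "A_below 1 = {}"
    using stable_A unfolding A_below_def by force
  then have "rvec m n u 1 = u (B 1) + 1"
    by (simp add: rvec_eq)
  then show False
    using full assms rvec_less_h[of 1] stable_B[of 1] stable_B[of h] h_range n_ge_1
    by (cases "h = 1") (auto simp: rvec_eq)
qed

lemma u'_topple:
  "u' = (\<lambda>x. u x + (rvec m n u h - 2) * Lap m n (A m) x - LapSet m n (A ` {nat k..m-1} \<union> B ` {h..n}) x)"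
  unfolding u'_def by (simp add: LapSet_image diff_diff_eq)

lemma toppled_sets: "{nat k..m-1} \<subseteq> {1..m}" "{h..n} \<subseteq> {1..n}"
  using k_ge_1 h_range by auto

lemma u'_B:
  assumes "i \<in> {1..n}"
  shows "u' (B i) = u (B i) - u (B h) + (if i < h then int m else 0)"
proof -
  have "u' (B i) = u (B i) - (rvec m n u h - 2) - ((if h \<le> i then int m else 0) - int (m - nat k))"
    unfolding u'_topple using LapSet_at_B[OF toppled_sets assms] Lap_A_B[of m m n i]
      assms m_ge_1 h_range by auto
  then show ?thesis
    using k_def k_le_m k_ge_1 by auto
qed

lemma u'_A:
  assumes "j \<in> {1..m-1}"
  shows "u' (A j) = u (A j) - (int h - 1) + (if int j < k then int n else 0)"
proof -
  have "u' (A j) = u (A j) - ((if nat k \<le> j then int n else 0) - int (n + 1 - h))"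
    unfolding u'_topple using LapSet_at_A[OF toppled_sets, of j] Lap_A_A[of m m n j]
      assms m_ge_1 h_range by auto
  then show ?thesis
    using h_range by auto
qed

lemma u'_A_less_n: "j \<in> {1..m-1} \<Longrightarrow> u' (A j) < int n"
  using u'_A less_k_iff stable_A h_range by fastforce

lemma u'_nonneg: "c \<in> verts m n - {A m} \<Longrightarrow> 0 \<le> u' c"
proof (cases c)
  case (A j)
  moreover assume "c \<in> verts m n - {A m}"
  ultimately have j: "j \<in> {1..m-1}"
    by (auto simp: A_in_verts)
  then show ?thesis
    using A u'_A less_k_iff stable_A h_range by fastforce
next
  case (B i)
  moreover assume "c \<in> verts m n - {A m}"
  ultimately have i: "i \<in> {1..n}"
    by (auto simp: B_in_verts)
  then show ?thesis
    using B u'_B[OF i] stable_B[OF i] stable_B[of h] sorted_B[of h i] h_range by auto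
qed

text \<open>Here $S$ avoids the window $h - 1 \le u_{a_j} \le i_0 - 2$.\<close>

lemma unstuck_tail:
  assumes S: "S \<subseteq> {1..m-1}" and T: "T \<subseteq> {1..n}" and i0: "i0 \<in> T" "h \<le> i0"
    and first: "\<And>i. i \<in> T \<Longrightarrow> h \<le> i \<Longrightarrow> i0 \<le> i"
    and A_full: "\<And>j. j \<in> S \<Longrightarrow> int n - int (card T) \<le> u' (A j)"
  shows "u' (B i0) < int m - int (card S)"
proof -
  have i0n: "i0 \<in> {1..n}" using i0 T by blast
  have "T \<subseteq> {1..n} - {h..<i0}"
    using T first by force
  then have "card T \<le> card ({1..n} - {h..<i0})"
    by (intro card_mono) auto
  also have "\<dots> = n - (i0 - h)"
    using h_range i0n by (subst card_Diff_subset) auto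
  finally have card_T: "int (card T) \<le> int n - (int i0 - int h)"
    using i0 i0n by auto
  define Y where "Y = A_below i0 - A_below h"
  have "j \<notin> Y" if j: "j \<in> S" for j
  proof
    assume "j \<in> Y"
    then have "j \<in> {1..m-1}" "\<not> int j < k" "u (A j) \<le> int i0 - 2"
      using less_k_iff unfolding Y_def A_below_def by auto
    then show False
      using A_full[OF j] u'_A card_T by auto
  qed
  then have "S \<subseteq> {1..m-1} - Y"
    using S by blast
  then have "card S \<le> card ({1..m-1} - Y)"
    by (intro card_mono) auto
  also have "\<dots> = (m - 1) - card Y"
    using A_below_subset unfolding Y_def by (subst card_Diff_subset) auto
  finally have "card S \<le> (m - 1) - card Y" .
  moreover have "card Y \<le> m - 1"
    using card_mono[of "{1..m-1}" Y] A_below_subset unfolding Y_def by auto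
  ultimately have "int (card S) \<le> int m - 1 - (int (card (A_below i0)) - int (card (A_below h)))"
    using card_A_below_diff[OF i0(2)] m_ge_1 unfolding Y_def by linarith
  then show ?thesis
    using u'_B[OF i0n] i0 rvec_le_h[OF i0n] by (simp add: rvec_eq)
qed

text \<open>Here $S$ lies in the window $i_0 - 1 \le u_{a_j} \le h - 2$.\<close>

lemma unstuck_head:
  assumes S: "S \<subseteq> {1..m-1}" and T: "T \<subseteq> {1..n}" "T \<subseteq> {i0..<h}" and i0: "i0 \<in> T"
    and A_full: "\<And>j. j \<in> S \<Longrightarrow> int n - int (card T) \<le> u' (A j)"
  shows "u' (B i0) < int m - int (card S)"
proof -
  have i0n: "i0 \<in> {1..n}" "i0 < h"
    using i0 T by auto
  have card_T: "int (card T) \<le> int h - int i0"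
    using card_mono[OF _ T(2)] i0n by auto
  define Y where "Y = A_below h - A_below i0"
  have "j \<in> Y" if j: "j \<in> S" for j
  proof -
    have j': "j \<in> {1..m-1}" using S j by blast
    have "int j < k"
      using A_full[OF j] u'_A[OF j'] stable_A[OF j'] card_T i0n by (auto split: if_splits)
    then show ?thesis
      using A_full[OF j] u'_A[OF j'] less_k_iff[OF j'] card_T j' unfolding Y_def A_below_def by auto
  qed
  then have "card S \<le> card Y"
    by (intro card_mono) (auto simp: Y_def)
  then have "int (card S) \<le> int (card (A_below h)) - int (card (A_below i0))"
    using card_A_below_diff[of i0 h] i0n unfolding Y_def by linarith
  then show ?thesis
    using u'_B[OF i0n(1)] i0n rvec_less_h[of i0] by (simp add: rvec_eq)
qed

lemma parking_u': "parking m n u'"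
  unfolding parking_iff
proof (intro conjI ballI allI impI)
  show "0 \<le> u' c" if "c \<in> verts m n - {A m}" for c
    using that by (rule u'_nonneg)
next
  fix S T assume S: "S \<subseteq> {1..m-1}" and T: "T \<subseteq> {1..n}" and nonempty: "S \<noteq> {} \<or> T \<noteq> {}"
  have "\<exists>i\<in>T. u' (B i) < int m - int (card S)"
    if A_full: "\<And>j. j \<in> S \<Longrightarrow> int n - int (card T) \<le> u' (A j)"
  proof -
    have fin: "finite T" using T finite_subset by blast
    consider "T = {}" | "T \<inter> {h..n} \<noteq> {}" | "T \<noteq> {}" "T \<inter> {h..n} = {}"
      by blast
    then show "\<exists>i\<in>T. u' (B i) < int m - int (card S)"
    proof cases
      case 1
      then obtain j where "j \<in> S" using nonempty by blast
      then show ?thesis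
        using A_full u'_A_less_n S 1 by fastforce
    next
      case 2
      let ?i0 = "Min (T \<inter> {h..n})"
      have i0: "?i0 \<in> T \<inter> {h..n}"
        using 2 fin by (intro Min_in) auto
      have "?i0 \<le> i" if "i \<in> T" "h \<le> i" for i
        using fin T that by (intro Min_le) auto
      then have "u' (B ?i0) < int m - int (card S)"
        using i0 A_full by (intro unstuck_tail[OF S T]) auto
      then show ?thesis
        using i0 by blast
    next
      case 3
      have "t < h" if "t \<in> T" for t
        using 3 T that by (metis IntI atLeastAtMost_iff empty_iff not_le subsetD)
      then have "Min T \<in> T" "T \<subseteq> {Min T..<h}"
        using 3 fin by auto
      then show ?thesis
        using unstuck_head[OF S T _ _ A_full] by blast
    qed
  qed
  then show "(\<exists>j\<in>S. u' (A j) < int n - int (card T)) \<or> (\<exists>i\<in>T. u' (B i) < int m - int (card S))"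
    by force
qed

lemma topp_equiv_u': "topp_equiv m n u u'"
  unfolding u'_topple
  using toppled_sets m_ge_1 by (intro topp_equiv_topple) (auto simp: verts_def)

lemma u'_sink: "u' (A m) = degree m n u - (\<Sum>i=1..n. u' (B i)) - (\<Sum>j=1..m-1. u' (A j))"
proof -
  have "{1..m} = insert m {1..m-1}"
    using m_ge_1 by auto
  then have "degree m n u' = u' (A m) + (\<Sum>j=1..m-1. u' (A j)) + (\<Sum>i=1..n. u' (B i))"
    unfolding degree_def sum_verts using m_ge_1 by simp
  then show ?thesis
    using topp_equiv_degree[OF topp_equiv_u'] by simp
qed

lemma sorted_u'_A: "sorted (map (\<lambda>j. u' (A j)) ([nat k..<m] @ [1..<nat k]))"
proof (rule sorted_map_upt_append)
  fix i j assume "nat k \<le> i" "i \<le> j" "j < m"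
  then have "i \<in> {1..m-1}" "j \<in> {1..m-1}" "\<not> int i < k" "\<not> int j < k" "i \<le> j"
    using k_ge_1 by auto
  then show "u' (A i) \<le> u' (A j)"
    using u'_A[of i] u'_A[of j] sorted_A[of i j] by simp
next
  fix i j assume "1 \<le> i" "i \<le> j" "j < nat k"
  then have "i \<in> {1..m-1}" "j \<in> {1..m-1}" "int i < k" "int j < k" "i \<le> j"
    using k_le_m by auto
  then show "u' (A i) \<le> u' (A j)"
    using u'_A[of i] u'_A[of j] sorted_A[of i j] by simp
next
  fix i j assume "nat k \<le> i" "i < m" "1 \<le> j" "j < nat k"
  then have "i \<in> {1..m-1}" "j \<in> {1..m-1}" "\<not> int i < k" "int j < k"
    using k_ge_1 k_le_m by auto
  then show "u' (A i) \<le> u' (A j)"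
    using u'_A[of i] u'_A[of j] stable_A[of i] stable_A[of j] by simp
qed

lemma sorted_u'_B: "sorted (map (\<lambda>i. u' (B i)) ([h..<n+1] @ [1..<h]))"
proof (rule sorted_map_upt_append)
  fix i j assume "h \<le> i" "i \<le> j" "j < n + 1"
  then have "i \<in> {1..n}" "j \<in> {1..n}" "\<not> i < h" "\<not> j < h" "i \<le> j"
    using h_range by auto
  then show "u' (B i) \<le> u' (B j)"
    using u'_B[of i] u'_B[of j] sorted_B[of i j] by simp
next
  fix i j assume "1 \<le> i" "i \<le> j" "j < h"
  then have "i \<in> {1..n}" "j \<in> {1..n}" "i < h" "j < h" "i \<le> j"
    using h_range by auto
  then show "u' (B i) \<le> u' (B j)"
    using u'_B[of i] u'_B[of j] sorted_B[of i j] by simp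
next
  fix i j assume "h \<le> i" "i < n + 1" "1 \<le> j" "j < h"
  then have "i \<in> {1..n}" "j \<in> {1..n}" "\<not> i < h" "j < h"
    using h_range by auto
  then show "u' (B i) \<le> u' (B j)"
    using u'_B[of i] u'_B[of j] stable_B[of i] stable_B[of j] by simp
qed

end

theorem mainTheorem6:
  fixes m n h :: nat and k :: int and u u' :: "vert \<Rightarrow> int"
  assumes "1 \<le> m" and "1 \<le> n"
    and "stable m n u" and "sorted_config m n u"
    and h_def: "h = (LEAST i. 1 \<le> i \<and> i \<le> n \<and> rvec m n u i = Max (rvec m n u ` {1..n}))"
    and k_def: "k = u (B h) - rvec m n u h + 2"
    and u'_def: "u' = (\<lambda>x. u x + (rvec m n u h - 2) * Lap m n (A m) x
                         - (\<Sum>s\<in>{nat k..m-1}. Lap m n (A s) x)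
                         - (\<Sum>t\<in>{h..n}. Lap m n (B t) x))"
  shows "(\<forall>x\<in>verts m n. u' x = park m n u x)
    \<and> k = 1 + int (card {j\<in>{1..m-1}. u (A j) + 1 \<le> int h - 1})
    \<and> (2 \<le> m \<longrightarrow> 1 \<le> k \<and> k \<le> int m - 1)
    \<and> (\<forall>i\<in>{1..n}. u' (B i) = u (B i) - u (B h) + int m * chi (i \<le> h - 1))
    \<and> (\<forall>j\<in>{1..m-1}. u' (A j) = u (A j) - (int h - 1) + int n * chi (int j \<le> k - 1))
    \<and> u' (A m) = degree m n u - (\<Sum>i=1..n. u' (B i)) - (\<Sum>j=1..m-1. u' (A j))
    \<and> sorted (map (\<lambda>j. u' (A j)) ([nat k..<m] @ [1..<nat k]))
    \<and> sorted (map (\<lambda>i. u' (B i)) ([h..<n+1] @ [1..<h]))"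
proof -
  interpret parking_rotation m n h k u u'
    using assms by unfold_locales
  have park: "\<forall>x\<in>verts m n. u' x = park m n u x"
    using park_eq_on_verts[OF parking_u' topp_equiv_u'] by simp
  have k_card: "k = 1 + int (card {j\<in>{1..m-1}. u (A j) + 1 \<le> int h - 1})"
    using k_eq unfolding A_below_def .
  have k_bounds: "2 \<le> m \<longrightarrow> 1 \<le> k \<and> k \<le> int m - 1"
    using k_ge_1 k_le_m_minus_1 by simp
  have B_values: "\<forall>i\<in>{1..n}. u' (B i) = u (B i) - u (B h) + int m * chi (i \<le> h - 1)"
    using u'_B h_range by (auto simp: chi_def)
  have A_values: "\<forall>j\<in>{1..m-1}. u' (A j) = u (A j) - (int h - 1) + int n * chi (int j \<le> k - 1)"
    using u'_A by (auto simp: chi_def)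
  show ?thesis
    by (intro conjI park k_card k_bounds B_values A_values u'_sink sorted_u'_A sorted_u'_B)
qed

end
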